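(* Under the standing setup, let $(v^k)$ be generated by Algorithm U. (1) If $K$ has at least two distinct eigenvalues, then: (i) almost surely $v^0$ is not a generalized eigenvector of $(A^TA,B^TB)$; (ii) if moreover $\dim G_{\lambda_1}=d-1$, then $v^1\in G_{\lambda_1}$ almost surely; (iii) for every $k\ge0$ and every generalized eigenvalue $\lambda$ with $\dim G_\lambda<d-1$, $\mathbb P\bigl(v^k\notin G_\lambda,\ v^{k+1}\in G_\lambda\bigr)=0$. (2) If $K$ has only one distinct eigenvalue, then $v^0\in G_{\lambda_1}$.
   Context: Standing setup. Let $d\ge 2$, $A\in\mathbb R^{m\times d}$, $B\in\mathbb R^{\ell\times d}$ with $\ker B=\{0\}$, so $B^TB$ is symmetric positive definite. $\mathbb S^{d-1}$ is the Euclidean unit sphere of $\mathbb R^d$ and $\mathcal U(\mathbb S^{d-1})$ the uniform (normalized surface) probability measure on it. Define $f(v)=\|Av\|^2/\|Bv\|^2$ for $v\neq0$. A generalized eigenvector of $(A^TA,B^TB)$ is a vector $v\neq 0$ with $A^TAv=\lambda B^TBv$ for some $\lambda\in\mathbb R$ (a generalized eigenvalue); the generalized eigenvalues are exactly the eigenvalues of the symmetric matrix $K=(B^TB)^{-1/2}A^TA(B^TB)^{-1/2}$, listed with multiplicity as $\lambda_1\ge\lambda_2\ge\dots\ge\lambda_d$. For a generalized eigenvalue $\lambda$ let $G_\lambda=\{v\in\mathbb R^d\setminus\{0\}: A^TAv=\lambda B^TBv\}$, and $\dim G_\lambda$ denotes the dimension of the linear subspace $G_\lambda\cup\{0\}$.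 Algorithm U. Let $g\sim\mathcal N(0,I_d)$ and $v^0=g/\|g\|$; let $x^0,x^1,x^2,\dots$ be i.i.d. with law $\mathcal U(\mathbb S^{d-1})$, independent of $g$. Given $v^k\in\mathbb S^{d-1}$, set $s_k(\tau)=f(v^k+\tau x^k)$ for $\tau\in\mathbb R$ with $v^k+\tau x^k\neq0$; let $\tau_k$ be a (measurably chosen) maximizer of $s_k$ over $\tau\in\mathbb R$, with $\tau_k=0$ if no maximizer exists, and set $v^{k+1}=(v^k+\tau_kx^k)/\|v^k+\tau_kx^k\|$. *)

theory Defs
  imports "HOL-Analysis.Analysis" "HOL-Probability.Probability"
begin

definition rq :: "real^'n^'m \<Rightarrow> real^'n^'l \<Rightarrow> real^'n \<Rightarrow> real" where
  "rq A B v = (norm (A *v v))\<^sup>2 / (norm (B *v v))\<^sup>2"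

definition psd_sqrt :: "real^'n^'n \<Rightarrow> real^'n^'n" where
  "psd_sqrt M = (THE S. transpose S = S \<and> (\<forall>x. 0 \<le> x \<bullet> (S *v x)) \<and> S ** S = M)"

definition Kmat :: "real^'n^'m \<Rightarrow> real^'n^'l \<Rightarrow> real^'n^'n" where
  "Kmat A B = (let R = matrix_inv (psd_sqrt (transpose B ** B))
               in (R ** (transpose A ** A)) ** R)"

definition eigenvalues :: "real^'n^'n \<Rightarrow> real set" where
  "eigenvalues K = {c. \<exists>v. v \<noteq> 0 \<and> K *v v = c *\<^sub>R v}"

definition lambda1 :: "real^'n^'m \<Rightarrow> real^'n^'l \<Rightarrow> real" where
  "lambda1 A B = Max (eigenvalues (Kmat A B))"

definition Gset :: "real^'n^'m \<Rightarrow> real^'n^'l \<Rightarrow> real \<Rightarrow> (real^'n) set" where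
  "Gset A B c = {v. v \<noteq> 0 \<and> (transpose A ** A) *v v = c *\<^sub>R ((transpose B ** B) *v v)}"

definition dimG :: "real^'n^'m \<Rightarrow> real^'n^'l \<Rightarrow> real \<Rightarrow> nat" where
  "dimG A B c = dim (insert 0 (Gset A B c))"

definition gen_eigvec :: "real^'n^'m \<Rightarrow> real^'n^'l \<Rightarrow> real^'n \<Rightarrow> bool" where
  "gen_eigvec A B v \<longleftrightarrow> (\<exists>c. v \<in> Gset A B c)"

definition std_gauss :: "(real^'n) measure" where
  "std_gauss = density lborel
     (\<lambda>y. ennreal ((2 * pi) powr (- real CARD('n) / 2) * exp (- (norm y)\<^sup>2 / 2)))"

text \<open>Uniform (normalized surface) probability measure on the unit sphere, realised as the
  cone measure: U(S) = Lebesgue measure of {y in the unit ball : y/|y| in S} divided by the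
  volume of the unit ball.\<close>
definition unif_sphere :: "(real^'n) measure" where
  "unif_sphere = distr (uniform_measure lborel (ball 0 1)) borel (\<lambda>y. (1 / norm y) *\<^sub>R y)"

definition is_max_selector :: "real^'n^'m \<Rightarrow> real^'n^'l \<Rightarrow> (real^'n \<Rightarrow> real^'n \<Rightarrow> real) \<Rightarrow> bool" where
  "is_max_selector A B sel \<longleftrightarrow>
     (\<forall>v \<in> sphere 0 1. \<forall>x \<in> sphere 0 1.
        (if (\<exists>\<tau>. v + \<tau> *\<^sub>R x \<noteq> 0 \<and>
                 (\<forall>\<sigma>. v + \<sigma> *\<^sub>R x \<noteq> 0 \<longrightarrow> rq A B (v + \<sigma> *\<^sub>R x) \<le> rq A B (v + \<tau> *\<^sub>R x)))
         then v + sel v x *\<^sub>R x \<noteq> 0 \<and>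
              (\<forall>\<sigma>. v + \<sigma> *\<^sub>R x \<noteq> 0 \<longrightarrow> rq A B (v + \<sigma> *\<^sub>R x) \<le> rq A B (v + sel v x *\<^sub>R x))
         else sel v x = 0))"

fun algU :: "(real^'n \<Rightarrow> real^'n \<Rightarrow> real) \<Rightarrow> real^'n \<Rightarrow> (nat \<Rightarrow> real^'n) \<Rightarrow> nat \<Rightarrow> real^'n" where
  "algU sel g xs 0 = (1 / norm g) *\<^sub>R g"
| "algU sel g xs (Suc k) =
     (let v = algU sel g xs k; w = v + sel v (xs k) *\<^sub>R xs k in (1 / norm w) *\<^sub>R w)"

end

theory Submission
  imports Defs
begin

text \<open>Substituting \<open>y = S v\<close>, with \<open>S\<close> the positive semidefinite square root of \<open>B\<^sup>T B\<close>,
  turns \<open>f\<close> into the Rayleigh quotient of the symmetric matrix \<open>K\<close>, so \<open>f \<le> \<lambda>\<^sub>1\<close> with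
  equality exactly on \<open>G\<^bsub>\<lambda>\<^sub>1\<^esub>\<close>, and every \<open>G\<^sub>\<lambda> \<union> {0}\<close> is the kernel of
  \<open>A\<^sup>T A - \<lambda> B\<^sup>T B\<close>. The Gaussian and the uniform spherical law give measure zero to proper
  subspaces, so \<open>v\<^sup>0\<close> avoids every eigenspace that is proper. If \<open>G\<^bsub>\<lambda>\<^sub>1\<^esub>\<close> is a
  hyperplane, the line through \<open>v\<^sup>0\<close> in direction \<open>x\<^sup>0\<close> meets it, so the maximum of \<open>f\<close> on
  that line is \<open>\<lambda>\<^sub>1\<close> and is attained only in \<open>G\<^bsub>\<lambda>\<^sub>1\<^esub>\<close>. Conversely, a step from
  \<open>v\<^sup>k \<notin> G\<^sub>\<lambda>\<close> can only land in \<open>G\<^sub>\<lambda>\<close> if \<open>x\<^sup>k\<close> lies in the span of \<open>v\<^sup>k\<close> and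
  \<open>G\<^sub>\<lambda>\<close>; when \<open>dim G\<^sub>\<lambda> < d - 1\<close> this is a proper subspace, hit with probability zero
  because \<open>x\<^sup>k\<close> is independent of \<open>v\<^sup>k\<close>. With a single eigenvalue \<open>K\<close> is scalar, and every
  nonzero vector lies in \<open>G\<^bsub>\<lambda>\<^sub>1\<^esub>\<close>.\<close>

section \<open>Spectral theorem for symmetric matrices\<close>

lemma symmetric_matrix_inner_commute:
  fixes M :: "real^'n^'n"
  assumes "transpose M = M"
  shows "x \<bullet> (M *v y) = (M *v x) \<bullet> y"
  by (metis assms dot_lmul_matrix transpose_matrix_vector)

lemma symmetric_matrixI:
  fixes M :: "real^'n^'n"
  assumes "\<And>x y. x \<bullet> (M *v y) = (M *v x) \<bullet> y"
  shows "transpose M = M"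
proof (rule matrix_eq[THEN iffD2], rule allI)
  fix y
  have "x \<bullet> (transpose M *v y - M *v y) = 0" for x
    using dot_lmul_matrix[of y M x] assms[of x y] by (simp add: inner_diff_right inner_commute)
  from this[of "transpose M *v y - M *v y"] show "transpose M *v y = M *v y" by simp
qed

lemma linear_coeff_eq_0_if_quadratic_nonpos:
  fixes a c :: real
  assumes "\<And>t. 2*t*a + t\<^sup>2*c \<le> 0"
  shows "a = 0"
proof (rule ccontr)
  assume "a \<noteq> 0"
  define k where "k = \<bar>c\<bar> + 1"
  have "k > 0" by (simp add: k_def)
  have "(2 * (a/k) * a + (a/k)\<^sup>2 * c) * k\<^sup>2 = a\<^sup>2 * (2*k + c)"
    using \<open>k > 0\<close> by (simp add: power2_eq_square field_simps)
  moreover have "(2 * (a/k) * a + (a/k)\<^sup>2 * c) * k\<^sup>2 \<le> 0"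
    using assms[of "a/k"] by (simp add: mult_nonpos_nonneg)
  moreover have "a\<^sup>2 * (2*k + c) > 0"
    using \<open>a \<noteq> 0\<close> unfolding k_def by (intro mult_pos_pos) auto
  ultimately show False by linarith
qed

text \<open>A maximiser of the Rayleigh quotient over the unit sphere of an invariant subspace is an
  eigenvector: the first-order condition makes \<open>M y\<^sub>0 - m y\<^sub>0\<close> orthogonal to the subspace.\<close>
lemma symmetric_invariant_subspace_has_eigenvector:
  fixes M :: "real^'n^'n"
  assumes sym: "transpose M = M" and W: "subspace W" and w: "w \<in> W" "w \<noteq> 0"
    and invariant: "\<And>z. z \<in> W \<Longrightarrow> M *v z \<in> W"
  obtains v \<mu> where "v \<in> W" "norm v = 1" "M *v v = \<mu> *\<^sub>R v"
proof -
  let ?S = "W \<inter> sphere 0 1"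
  have "compact ?S"
    using closed_subspace[OF W] compact_sphere by (rule closed_Int_compact)
  moreover have "(1 / norm w) *\<^sub>R w \<in> ?S"
    using W w by (simp add: subspace_scale)
  moreover have "continuous_on ?S (\<lambda>y. y \<bullet> (M *v y))"
    by (intro continuous_on_inner continuous_on_id matrix_vector_mult_linear_continuous_on)
  ultimately obtain y0 where y0: "y0 \<in> ?S" and max: "\<And>y. y \<in> ?S \<Longrightarrow> y \<bullet> (M *v y) \<le> y0 \<bullet> (M *v y0)"
    using continuous_attains_sup[of ?S] by blast
  define m where "m = y0 \<bullet> (M *v y0)"
  have y0_unit: "y0 \<bullet> y0 = 1"
    using y0 by (simp add: power2_norm_eq_inner[symmetric])
  have bound: "u \<bullet> (M *v u) \<le> m * (u \<bullet> u)" if "u \<in> W" for u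
  proof (cases "u = 0")
    case False
    have "(1 / norm u) *\<^sub>R u \<in> ?S"
      using that False W by (simp add: subspace_scale)
    from max[OF this] False show ?thesis
      by (simp add: m_def matrix_vector_mult_scaleR power2_norm_eq_inner[symmetric] power2_eq_square
          divide_le_eq)
  qed simp
  have orthogonal: "z \<bullet> (M *v y0 - m *\<^sub>R y0) = 0" if z: "z \<in> W" for z
  proof (rule linear_coeff_eq_0_if_quadratic_nonpos)
    fix t
    have "y0 + t *\<^sub>R z \<in> W"
      using y0 z W by (simp add: subspace_add subspace_scale)
    from bound[OF this]
    have "m + 2*t*(z \<bullet> (M *v y0)) + t\<^sup>2 * (z \<bullet> (M *v z)) \<le> m * (1 + 2*t*(z \<bullet> y0) + t\<^sup>2 * (z \<bullet> z))"
      using symmetric_matrix_inner_commute[OF sym, of y0 z] y0_unit unfolding m_def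
      by (simp add: matrix_vector_right_distrib matrix_vector_mult_scaleR inner_add_left
          inner_add_right inner_commute power2_eq_square algebra_simps)
    then show "2 * t * (z \<bullet> (M *v y0 - m *\<^sub>R y0)) + t\<^sup>2 * (z \<bullet> (M *v z) - m * (z \<bullet> z)) \<le> 0"
      by (simp add: inner_diff_right algebra_simps)
  qed
  have "M *v y0 - m *\<^sub>R y0 \<in> W"
    using invariant W y0 by (simp add: subspace_diff subspace_scale)
  from orthogonal[OF this] have "M *v y0 = m *\<^sub>R y0"
    by simp
  with y0 show ?thesis
    by (intro that) auto
qed

lemma symmetric_orthogonal_unit_eigenvector_exists:
  fixes M :: "real^'n^'n"
  assumes sym: "transpose M = M" and E: "finite E" "card E < CARD('n)"
    and eigen: "\<And>b. b \<in> E \<Longrightarrow> M *v b = \<mu> b *\<^sub>R b"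
  obtains v c where "norm v = 1" "M *v v = c *\<^sub>R v" "\<And>b. b \<in> E \<Longrightarrow> orthogonal b v"
proof -
  let ?W = "{y. \<forall>b\<in>E. orthogonal b y}"
  have "dim E < DIM(real^'n)"
    using dim_le_card[OF order.refl E(1)] E(2) by simp
  then obtain w where w: "w \<noteq> 0" "\<And>y. y \<in> span E \<Longrightarrow> orthogonal w y"
    by (rule orthogonal_to_subspace_exists) auto
  then have "w \<in> ?W"
    by (auto simp: orthogonal_commute span_base)
  moreover have "M *v z \<in> ?W" if "z \<in> ?W" for z
    using that symmetric_matrix_inner_commute[OF sym] eigen by (simp add: orthogonal_def)
  ultimately obtain v c where "v \<in> ?W" "norm v = 1" "M *v v = c *\<^sub>R v"
    using symmetric_invariant_subspace_has_eigenvector[OF sym subspace_orthogonal_to_vectors _ w(1)]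
    by blast
  then show ?thesis
    using that by blast
qed

locale orthonormal_eigenbasis =
  fixes M :: "real^'n^'n" and E :: "(real^'n) set" and \<mu> :: "real^'n \<Rightarrow> real"
  assumes finite_E: "finite E"
    and orthonormal: "\<And>b b'. b \<in> E \<Longrightarrow> b' \<in> E \<Longrightarrow> b \<bullet> b' = (if b = b' then 1 else 0)"
    and eigenvector: "\<And>b. b \<in> E \<Longrightarrow> M *v b = \<mu> b *\<^sub>R b"
    and expansion: "\<And>y. (\<Sum>b\<in>E. (y \<bullet> b) *\<^sub>R b) = y"
begin

lemma inner_sum_basis:
  assumes "b0 \<in> E"
  shows "(\<Sum>b\<in>E. f b *\<^sub>R b) \<bullet> b0 = f b0"
proof -
  have "(\<Sum>b\<in>E. f b *\<^sub>R b) \<bullet> b0 = (\<Sum>b\<in>E. if b = b0 then f b else 0)"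
    using orthonormal[OF _ assms] by (auto simp: inner_sum_left intro!: sum.cong)
  also have "\<dots> = f b0"
    using finite_E assms by simp
  finally show ?thesis .
qed

lemma matrix_vector_expansion: "M *v y = (\<Sum>b\<in>E. (\<mu> b * (y \<bullet> b)) *\<^sub>R b)"
proof -
  have "M *v y = M *v (\<Sum>b\<in>E. (y \<bullet> b) *\<^sub>R b)"
    by (simp add: expansion)
  also have "\<dots> = (\<Sum>b\<in>E. (\<mu> b * (y \<bullet> b)) *\<^sub>R b)"
    by (simp add: vec.sum matrix_vector_mult_scaleR eigenvector mult.commute cong: sum.cong)
  finally show ?thesis .
qed

lemma quadratic_form_expansion: "y \<bullet> (M *v y) = (\<Sum>b\<in>E. \<mu> b * (y \<bullet> b)\<^sup>2)"
  by (simp add: matrix_vector_expansion inner_sum_right power2_eq_square mult.assoc)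

lemma inner_self_expansion: "y \<bullet> y = (\<Sum>b\<in>E. (y \<bullet> b)\<^sup>2)"
  by (subst (2) expansion[of y, symmetric]) (simp add: inner_sum_right power2_eq_square)

lemma matrix_eqI:
  fixes T T' :: "real^'n^'n"
  assumes "\<And>b. b \<in> E \<Longrightarrow> T *v b = T' *v b"
  shows "T = T'"
proof (rule matrix_eq[THEN iffD2], rule allI)
  fix y
  show "T *v y = T' *v y"
    by (subst (1 2) expansion[of y, symmetric]) (simp add: vec.sum matrix_vector_mult_scaleR assms)
qed

lemma eigenvector_if_coefficients:
  assumes "\<And>b. b \<in> E \<Longrightarrow> \<mu> b * (y \<bullet> b) = c * (y \<bullet> b)"
  shows "M *v y = c *\<^sub>R y"
proof -
  have "M *v y = (\<Sum>b\<in>E. (c * (y \<bullet> b)) *\<^sub>R b)"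
    unfolding matrix_vector_expansion using assms by (intro sum.cong) auto
  also have "\<dots> = c *\<^sub>R (\<Sum>b\<in>E. (y \<bullet> b) *\<^sub>R b)"
    by (simp add: scaleR_sum_right)
  also have "\<dots> = c *\<^sub>R y"
    by (simp add: expansion)
  finally show ?thesis .
qed

lemma eigenvalues_eq: "eigenvalues M = \<mu> ` E"
proof
  show "\<mu> ` E \<subseteq> eigenvalues M"
  proof
    fix c assume "c \<in> \<mu> ` E"
    then obtain b where "b \<in> E" "c = \<mu> b"
      by blast
    moreover from this have "b \<noteq> 0"
      using orthonormal[of b b] by auto
    ultimately show "c \<in> eigenvalues M"
      using eigenvector unfolding eigenvalues_def by blast
  qed
next
  show "eigenvalues M \<subseteq> \<mu> ` E"
  proof
    fix c assume "c \<in> eigenvalues M"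
    then obtain y where y: "y \<noteq> 0" "M *v y = c *\<^sub>R y"
      by (auto simp: eigenvalues_def)
    have "\<exists>b\<in>E. y \<bullet> b \<noteq> 0"
    proof (rule ccontr)
      assume "\<not> ?thesis"
      then have "(\<Sum>b\<in>E. (y \<bullet> b) *\<^sub>R b) = 0"
        by simp
      with expansion[of y] y(1) show False
        by simp
    qed
    then obtain b where b: "b \<in> E" "y \<bullet> b \<noteq> 0"
      by blast
    have "c * (y \<bullet> b) = \<mu> b * (y \<bullet> b)"
      using arg_cong[OF matrix_vector_expansion[of y], of "\<lambda>z. z \<bullet> b"] y(2) inner_sum_basis[OF b(1)]
      by simp
    with b show "c \<in> \<mu> ` E"
      by auto
  qed
qed

lemma eigenvalue_le_Max: "b \<in> E \<Longrightarrow> \<mu> b \<le> Max (eigenvalues M)"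
  unfolding eigenvalues_eq using finite_E by (intro Max_ge) auto

lemma quadratic_form_le_Max_eigenvalue: "y \<bullet> (M *v y) \<le> Max (eigenvalues M) * (y \<bullet> y)"
proof -
  have "y \<bullet> (M *v y) = (\<Sum>b\<in>E. \<mu> b * (y \<bullet> b)\<^sup>2)"
    by (rule quadratic_form_expansion)
  also have "\<dots> \<le> (\<Sum>b\<in>E. Max (eigenvalues M) * (y \<bullet> b)\<^sup>2)"
    by (intro sum_mono mult_right_mono eigenvalue_le_Max) auto
  also have "\<dots> = Max (eigenvalues M) * (y \<bullet> y)"
    unfolding inner_self_expansion[of y] by (simp add: sum_distrib_left)
  finally show ?thesis .
qed

lemma quadratic_form_eq_Max_eigenvalue_imp_eigenvector:
  assumes "y \<bullet> (M *v y) = Max (eigenvalues M) * (y \<bullet> y)"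
  shows "M *v y = Max (eigenvalues M) *\<^sub>R y"
proof (rule eigenvector_if_coefficients)
  let ?l = "Max (eigenvalues M)"
  have "(\<Sum>b\<in>E. (?l - \<mu> b) * (y \<bullet> b)\<^sup>2) = 0"
    using assms unfolding quadratic_form_expansion[of y] inner_self_expansion[of y]
    by (simp add: sum_distrib_left sum_subtractf left_diff_distrib)
  moreover have "\<forall>b\<in>E. 0 \<le> (?l - \<mu> b) * (y \<bullet> b)\<^sup>2"
    using eigenvalue_le_Max by simp
  ultimately have "\<forall>b\<in>E. (?l - \<mu> b) * (y \<bullet> b)\<^sup>2 = 0"
    by (subst (asm) sum_nonneg_eq_0_iff[OF finite_E]) auto
  then show "\<mu> b * (y \<bullet> b) = ?l * (y \<bullet> b)" if "b \<in> E" for b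
    using that by (auto simp: algebra_simps)
qed

lemma single_eigenvalue_imp_scalar:
  assumes "card (eigenvalues M) = 1"
  shows "M *v y = Max (eigenvalues M) *\<^sub>R y"
proof (rule eigenvector_if_coefficients)
  obtain c where c: "\<mu> ` E = {c}"
    using assms card_1_singletonE unfolding eigenvalues_eq by blast
  moreover have "\<mu> b = c" if "b \<in> E" for b
    using c that by blast
  ultimately show "\<mu> b * (y \<bullet> b) = Max (eigenvalues M) * (y \<bullet> b)" if "b \<in> E" for b
    using that by (simp add: eigenvalues_eq)
qed

end

lemma symmetric_matrix_orthonormal_eigenbasis:
  fixes M :: "real^'n^'n"
  assumes sym: "transpose M = M"
  obtains E \<mu> where "orthonormal_eigenbasis M E \<mu>"
proof -
  define unit_eigenvectors where "unit_eigenvectors E \<mu> \<longleftrightarrow>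
      finite E \<and> pairwise orthogonal E \<and> (\<forall>b\<in>E. norm b = 1 \<and> M *v b = \<mu> b *\<^sub>R b)" for E \<mu>
  have "\<exists>E \<mu>. unit_eigenvectors E \<mu> \<and> card E = k" if "k \<le> CARD('n)" for k
    using that
  proof (induction k)
    case 0
    show ?case
      by (auto simp: unit_eigenvectors_def intro!: exI[of _ "{}"])
  next
    case (Suc k)
    then obtain E \<mu> where E: "unit_eigenvectors E \<mu>" "card E = k"
      by auto
    then obtain v c where v: "norm v = 1" "M *v v = c *\<^sub>R v" "\<And>b. b \<in> E \<Longrightarrow> orthogonal b v"
      using symmetric_orthogonal_unit_eigenvector_exists[OF sym, of E \<mu>] Suc.prems
      by (auto simp: unit_eigenvectors_def)
    have "v \<notin> E"
      using v(1) v(3)[of v] by (auto simp: orthogonal_def)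
    then have "unit_eigenvectors (insert v E) (\<mu>(v := c)) \<and> card (insert v E) = Suc k"
      using E v by (auto simp: unit_eigenvectors_def pairwise_insert orthogonal_commute)
    then show ?case
      by blast
  qed
  then obtain E \<mu> where E: "unit_eigenvectors E \<mu>" "card E = CARD('n)"
    by blast
  then have "independent E"
    by (intro pairwise_orthogonal_independent) (auto simp: unit_eigenvectors_def)
  then have "dim E = CARD('n)"
    using E(2) by (simp add: dim_eq_card_independent)
  then have "span E = UNIV"
    using dim_eq_full[of E] by simp
  with E have "orthonormal_eigenbasis M E \<mu>"
    unfolding unit_eigenvectors_def
    by unfold_locales (auto simp: pairwise_def orthogonal_def norm_eq_1 intro: orthonormal_basis_expand)
  then show ?thesis
    by (rule that)
qed

lemma symmetric_quadratic_form_le_Max_eigenvalue: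
  fixes M :: "real^'n^'n"
  assumes "transpose M = M"
  shows "y \<bullet> (M *v y) \<le> Max (eigenvalues M) * (y \<bullet> y)"
  by (metis assms orthonormal_eigenbasis.quadratic_form_le_Max_eigenvalue
      symmetric_matrix_orthonormal_eigenbasis)

lemma symmetric_quadratic_form_eq_Max_eigenvalue_imp_eigenvector:
  fixes M :: "real^'n^'n"
  assumes "transpose M = M" and "y \<bullet> (M *v y) = Max (eigenvalues M) * (y \<bullet> y)"
  shows "M *v y = Max (eigenvalues M) *\<^sub>R y"
  by (metis assms orthonormal_eigenbasis.quadratic_form_eq_Max_eigenvalue_imp_eigenvector
      symmetric_matrix_orthonormal_eigenbasis)

lemma symmetric_single_eigenvalue_imp_scalar:
  fixes M :: "real^'n^'n"
  assumes "transpose M = M" and "card (eigenvalues M) = 1"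
  shows "M *v y = Max (eigenvalues M) *\<^sub>R y"
  by (metis assms orthonormal_eigenbasis.single_eigenvalue_imp_scalar
      symmetric_matrix_orthonormal_eigenbasis)

section \<open>Positive semidefinite square roots\<close>

lemma psd_root_on_eigenvector:
  fixes T :: "real^'n^'n"
  assumes sym: "transpose T = T" and psd: "\<And>x. 0 \<le> x \<bullet> (T *v x)"
    and b: "(T ** T) *v b = m *\<^sub>R b" and m: "0 \<le> m"
  shows "T *v b = sqrt m *\<^sub>R b"
proof (cases "m = 0")
  case True
  have "(T *v b) \<bullet> (T *v b) = b \<bullet> ((T ** T) *v b)"
    using symmetric_matrix_inner_commute[OF sym, of b "T *v b"] by (simp add: matrix_vector_mul_assoc)
  with True b show ?thesis
    by simp
next
  case False
  define s where "s = sqrt m"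
  define w where "w = T *v b - s *\<^sub>R b"
  have "s > 0" and ss: "s * s = m"
    using m False by (simp_all add: s_def)
  have "T *v w = - s *\<^sub>R w"
    using b unfolding w_def ss[symmetric]
    by (simp add: matrix_vector_mul_assoc[symmetric] matrix_vector_mult_diff_distrib
        matrix_vector_mult_scaleR algebra_simps)
  then have "s * (w \<bullet> w) \<le> 0"
    using psd[of w] by simp
  with \<open>s > 0\<close> have "w = 0"
    by (meson inner_gt_zero_iff mult_pos_pos not_le)
  then show ?thesis
    by (simp add: w_def s_def)
qed

text \<open>Uniqueness: every symmetric positive semidefinite root of \<open>T ** T\<close> acts on each eigenvector
  of \<open>T ** T\<close> by the square root of its eigenvalue.\<close>
lemma psd_sqrt_eqI:
  fixes T :: "real^'n^'n"
  assumes sym: "transpose T = T" and psd: "\<And>x. 0 \<le> x \<bullet> (T *v x)"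
  shows "psd_sqrt (T ** T) = T"
proof -
  have "transpose (T ** T) = T ** T"
    using sym by (simp add: matrix_transpose_mul)
  then obtain E \<mu> where "orthonormal_eigenbasis (T ** T) E \<mu>"
    by (rule symmetric_matrix_orthonormal_eigenbasis)
  then interpret orthonormal_eigenbasis "T ** T" E \<mu> .
  have \<mu>_nonneg: "0 \<le> \<mu> b" if "b \<in> E" for b
  proof -
    have "\<mu> b = b \<bullet> ((T ** T) *v b)"
      using eigenvector[OF that] orthonormal[OF that that] by simp
    also have "\<dots> = (T *v b) \<bullet> (T *v b)"
      using symmetric_matrix_inner_commute[OF sym, of b "T *v b"] by (simp add: matrix_vector_mul_assoc)
    finally show ?thesis
      by simp
  qed
  have "T' = T" if "transpose T' = T'" "\<And>x. 0 \<le> x \<bullet> (T' *v x)" "T' ** T' = T ** T" for T'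
  proof (rule matrix_eqI)
    fix b assume b: "b \<in> E"
    have "T' *v b = sqrt (\<mu> b) *\<^sub>R b"
      using that eigenvector[OF b] by (intro psd_root_on_eigenvector \<mu>_nonneg[OF b]) auto
    moreover have "T *v b = sqrt (\<mu> b) *\<^sub>R b"
      using sym psd eigenvector[OF b] by (intro psd_root_on_eigenvector \<mu>_nonneg[OF b]) auto
    ultimately show "T' *v b = T *v b"
      by simp
  qed
  with sym psd show ?thesis
    unfolding psd_sqrt_def by (intro the_equality) auto
qed

lemma psd_root_exists:
  fixes N :: "real^'n^'n"
  assumes sym: "transpose N = N" and psd: "\<And>x. 0 \<le> x \<bullet> (N *v x)"
  obtains T where "transpose T = T" "\<And>x. 0 \<le> x \<bullet> (T *v x)" "T ** T = N"
proof -
  obtain E \<mu> where "orthonormal_eigenbasis N E \<mu>"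
    using symmetric_matrix_orthonormal_eigenbasis[OF sym] .
  then interpret orthonormal_eigenbasis N E \<mu> .
  have \<mu>_nonneg: "0 \<le> \<mu> b" if "b \<in> E" for b
    using psd[of b] eigenvector[OF that] orthonormal[OF that that] by simp
  define f where "f x = (\<Sum>b\<in>E. (sqrt (\<mu> b) * (x \<bullet> b)) *\<^sub>R b)" for x
  have "linear f"
    unfolding f_def linear_iff
    by (auto simp: inner_add_left scaleR_add_left sum.distrib algebra_simps scaleR_sum_right)
  define T where "T = matrix f"
  have T: "T *v x = f x" for x
    unfolding T_def using \<open>linear f\<close> by (simp add: matrix_works)
  have T_inner: "x \<bullet> (T *v y) = (\<Sum>b\<in>E. sqrt (\<mu> b) * (y \<bullet> b) * (x \<bullet> b))" for x y
    unfolding T f_def by (simp add: inner_sum_right algebra_simps)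
  have T_eigenvector: "T *v b = sqrt (\<mu> b) *\<^sub>R b" if "b \<in> E" for b
  proof -
    have "T *v b = (\<Sum>b'\<in>E. if b' = b then sqrt (\<mu> b') *\<^sub>R b' else 0)"
      unfolding T f_def using orthonormal[OF that] by (intro sum.cong) auto
    with finite_E that show ?thesis
      by simp
  qed
  show ?thesis
  proof
    show "transpose T = T"
      by (rule symmetric_matrixI) (simp add: T_inner inner_commute[of "T *v _"] mult.commute mult.left_commute)
    show "0 \<le> x \<bullet> (T *v x)" for x
      unfolding T_inner using \<mu>_nonneg by (auto intro!: sum_nonneg simp: mult.assoc)
    show "T ** T = N"
    proof (rule matrix_eqI)
      fix b assume "b \<in> E"
      then show "(T ** T) *v b = N *v b"
        using \<mu>_nonneg[of b] by (simp add: matrix_vector_mul_assoc[symmetric] matrix_vector_mult_scaleR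
            T_eigenvector eigenvector)
    qed
  qed
qed

lemma psd_sqrt:
  fixes N :: "real^'n^'n"
  assumes "transpose N = N" and "\<And>x. 0 \<le> x \<bullet> (N *v x)"
  shows "transpose (psd_sqrt N) = psd_sqrt N" and "0 \<le> x \<bullet> (psd_sqrt N *v x)"
    and "psd_sqrt N ** psd_sqrt N = N"
proof -
  obtain T where T: "transpose T = T" "\<And>x. 0 \<le> x \<bullet> (T *v x)" and N: "N = T ** T"
    using psd_root_exists[OF assms] by metis
  have "psd_sqrt N = T"
    unfolding N using T by (rule psd_sqrt_eqI)
  with T N show "transpose (psd_sqrt N) = psd_sqrt N" "0 \<le> x \<bullet> (psd_sqrt N *v x)"
    "psd_sqrt N ** psd_sqrt N = N"
    by simp_all
qed

section \<open>The generalized eigenproblem\<close>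

lemma inner_gram_matrix:
  fixes C :: "real^'n^'m"
  shows "x \<bullet> ((transpose C ** C) *v x) = (norm (C *v x))\<^sup>2"
  by (metis dot_lmul_matrix inner_commute matrix_vector_mul_assoc power2_norm_eq_inner
      transpose_matrix_vector)

lemma symmetric_gram_matrix:
  fixes C :: "real^'n^'m"
  shows "transpose (transpose C ** C) = transpose C ** C"
  by (simp add: matrix_transpose_mul)

lemma scaleR_mem_Gset_iff: "r *\<^sub>R v \<in> Gset A B c \<longleftrightarrow> r \<noteq> 0 \<and> v \<in> Gset A B c"
  by (auto simp: Gset_def matrix_vector_mult_scaleR) (metis mult.commute scaleR_cancel_left scaleR_scaleR)

lemma Gset_nonzero: "v \<in> Gset A B c \<Longrightarrow> v \<noteq> 0"
  by (simp add: Gset_def)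

lemma subspace_kernel:
  fixes L :: "real^'n^'m"
  shows "subspace {z. L *v z = 0}"
  unfolding subspace_def by (simp add: matrix_vector_right_distrib matrix_vector_mult_scaleR)

lemma Gset_kernel: "insert 0 (Gset A B c) = {z. (transpose A ** A - c *\<^sub>R (transpose B ** B)) *v z = 0}"
  by (auto simp: Gset_def matrix_vector_mult_diff_rdistrib scaleR_matrix_vector_assoc)

lemma subspace_Gset: "subspace (insert 0 (Gset A B c))"
  unfolding Gset_kernel by (rule subspace_kernel)

locale generalized_eigenproblem =
  fixes A :: "real^'n^'m" and B :: "real^'n^'l"
  assumes ker_B: "\<And>v. B *v v = 0 \<Longrightarrow> v = 0"
begin

abbreviation root :: "real^'n^'n"
  where "root \<equiv> psd_sqrt (transpose B ** B)"

lemma symmetric_root: "transpose root = root"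
  and root_root: "root *v (root *v x) = (transpose B ** B) *v x"
  using psd_sqrt[OF symmetric_gram_matrix, of B] by (simp_all add: inner_gram_matrix matrix_vector_mul_assoc)

lemma root_eq_0_iff: "root *v x = 0 \<longleftrightarrow> x = 0"
proof
  assume "root *v x = 0"
  then have "(norm (B *v x))\<^sup>2 = 0"
    using root_root[of x] inner_gram_matrix[of x B] by simp
  then show "x = 0"
    using ker_B by simp
qed simp

lemma root_inverse: "root ** matrix_inv root = mat 1" "matrix_inv root ** root = mat 1"
proof -
  have "inj ((*v) root)"
  proof (rule injI)
    fix x y assume "root *v x = root *v y"
    then have "root *v (x - y) = 0"
      by (simp add: matrix_vector_mult_diff_distrib)
    then show "x = y"
      using root_eq_0_iff by simp
  qed
  then have "invertible root"
    by (simp add: invertible_left_inverse matrix_left_invertible_injective)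
  then have "root ** matrix_inv root = mat 1 \<and> matrix_inv root ** root = mat 1"
    unfolding invertible_def matrix_inv_def by (rule someI_ex)
  then show "root ** matrix_inv root = mat 1" "matrix_inv root ** root = mat 1"
    by auto
qed

lemma root_inverse_apply: "matrix_inv root *v (root *v x) = x" "root *v (matrix_inv root *v x) = x"
  by (simp_all add: matrix_vector_mul_assoc root_inverse)

lemma symmetric_root_inverse: "transpose (matrix_inv root) = matrix_inv root"
proof -
  have "transpose (matrix_inv root) ** root = mat 1"
    using arg_cong[OF root_inverse(1), of transpose] symmetric_root
    by (simp add: matrix_transpose_mul transpose_mat)
  then have "transpose (matrix_inv root) = transpose (matrix_inv root) ** (root ** matrix_inv root)"
    by (simp add: root_inverse)
  also have "\<dots> = matrix_inv root"
    by (simp add: matrix_mul_assoc \<open>transpose (matrix_inv root) ** root = mat 1\<close>)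
  finally show ?thesis .
qed

lemma Kmat_eq: "Kmat A B = (matrix_inv root ** (transpose A ** A)) ** matrix_inv root"
  by (simp add: Kmat_def Let_def)

lemma symmetric_Kmat: "transpose (Kmat A B) = Kmat A B"
  unfolding Kmat_eq
  by (simp add: matrix_transpose_mul symmetric_root_inverse symmetric_gram_matrix matrix_mul_assoc)

lemma Kmat_root: "Kmat A B *v (root *v v) = matrix_inv root *v ((transpose A ** A) *v v)"
  unfolding Kmat_eq by (simp add: matrix_vector_mul_assoc[symmetric] root_inverse_apply)

lemma Gset_iff_Kmat_eigenvector:
  "v \<in> Gset A B c \<longleftrightarrow> v \<noteq> 0 \<and> Kmat A B *v (root *v v) = c *\<^sub>R (root *v v)"
proof -
  have "(transpose A ** A) *v v = c *\<^sub>R ((transpose B ** B) *v v)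
    \<longleftrightarrow> matrix_inv root *v ((transpose A ** A) *v v) = c *\<^sub>R (root *v v)"
  proof
    assume "(transpose A ** A) *v v = c *\<^sub>R ((transpose B ** B) *v v)"
    then have "matrix_inv root *v ((transpose A ** A) *v v) = c *\<^sub>R (matrix_inv root *v (root *v (root *v v)))"
      by (simp add: root_root matrix_vector_mult_scaleR)
    then show "matrix_inv root *v ((transpose A ** A) *v v) = c *\<^sub>R (root *v v)"
      by (simp add: root_inverse_apply)
  next
    assume "matrix_inv root *v ((transpose A ** A) *v v) = c *\<^sub>R (root *v v)"
    then have "root *v (matrix_inv root *v ((transpose A ** A) *v v)) = c *\<^sub>R (root *v (root *v v))"
      by (simp add: matrix_vector_mult_scaleR)
    then show "(transpose A ** A) *v v = c *\<^sub>R ((transpose B ** B) *v v)"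
      by (simp add: root_inverse_apply root_root)
  qed
  then show ?thesis
    by (simp add: Gset_def Kmat_root)
qed

lemma eigenvalues_Kmat_iff: "c \<in> eigenvalues (Kmat A B) \<longleftrightarrow> Gset A B c \<noteq> {}"
proof
  assume "c \<in> eigenvalues (Kmat A B)"
  then obtain y where y: "y \<noteq> 0" "Kmat A B *v y = c *\<^sub>R y"
    by (auto simp: eigenvalues_def)
  moreover have "matrix_inv root *v y \<noteq> 0"
    using y(1) root_inverse_apply(2)[of y] by auto
  ultimately have "matrix_inv root *v y \<in> Gset A B c"
    by (simp add: Gset_iff_Kmat_eigenvector root_inverse_apply)
  then show "Gset A B c \<noteq> {}"
    by blast
next
  assume "Gset A B c \<noteq> {}"
  then obtain v where "v \<in> Gset A B c"
    by blast
  then show "c \<in> eigenvalues (Kmat A B)"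
    unfolding eigenvalues_def Gset_iff_Kmat_eigenvector using root_eq_0_iff by blast
qed

lemma rq_eq_Rayleigh_quotient_Kmat:
  "rq A B v = ((root *v v) \<bullet> (Kmat A B *v (root *v v))) / ((root *v v) \<bullet> (root *v v))"
proof -
  have "(root *v v) \<bullet> (Kmat A B *v (root *v v)) = (norm (A *v v))\<^sup>2"
    using symmetric_matrix_inner_commute[OF symmetric_root_inverse, of "root *v v"]
    by (simp add: Kmat_root root_inverse_apply inner_gram_matrix)
  moreover have "(root *v v) \<bullet> (root *v v) = (norm (B *v v))\<^sup>2"
    using symmetric_matrix_inner_commute[OF symmetric_root, of "root *v v" v]
    by (simp add: root_root inner_gram_matrix inner_commute)
  ultimately show ?thesis
    by (simp add: rq_def)
qed

lemma rq_le_lambda1: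
  assumes "v \<noteq> 0"
  shows "rq A B v \<le> lambda1 A B"
proof -
  have "(root *v v) \<bullet> (root *v v) > 0"
    using assms root_eq_0_iff by simp
  with symmetric_quadratic_form_le_Max_eigenvalue[OF symmetric_Kmat, of "root *v v"] show ?thesis
    by (simp add: rq_eq_Rayleigh_quotient_Kmat lambda1_def divide_le_eq)
qed

lemma rq_eq_lambda1_imp_Gset:
  assumes "v \<noteq> 0" and "rq A B v = lambda1 A B"
  shows "v \<in> Gset A B (lambda1 A B)"
proof -
  have "(root *v v) \<bullet> (root *v v) > 0"
    using assms root_eq_0_iff by simp
  with assms(2) have "(root *v v) \<bullet> (Kmat A B *v (root *v v)) = lambda1 A B * ((root *v v) \<bullet> (root *v v))"
    by (simp add: rq_eq_Rayleigh_quotient_Kmat divide_eq_eq)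
  then have "Kmat A B *v (root *v v) = lambda1 A B *\<^sub>R (root *v v)"
    unfolding lambda1_def by (rule symmetric_quadratic_form_eq_Max_eigenvalue_imp_eigenvector[OF symmetric_Kmat])
  with assms(1) show ?thesis
    by (simp add: Gset_iff_Kmat_eigenvector)
qed

lemma single_eigenvalue_imp_Gset:
  assumes "card (eigenvalues (Kmat A B)) = 1" and "v \<noteq> 0"
  shows "v \<in> Gset A B (lambda1 A B)"
  using symmetric_single_eigenvalue_imp_scalar[OF symmetric_Kmat assms(1)] assms(2)
  by (simp add: Gset_iff_Kmat_eigenvector lambda1_def)

lemma rq_Gset:
  assumes "v \<in> Gset A B c"
  shows "rq A B v = c"
proof -
  have "v \<noteq> 0" and eigen: "(transpose A ** A) *v v = c *\<^sub>R ((transpose B ** B) *v v)"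
    using assms by (auto simp: Gset_def)
  have "(norm (A *v v))\<^sup>2 = c * (norm (B *v v))\<^sup>2"
    using arg_cong[OF eigen, of "inner v"] by (simp add: inner_gram_matrix)
  moreover have "B *v v \<noteq> 0"
    using ker_B \<open>v \<noteq> 0\<close> by blast
  ultimately show ?thesis
    by (simp add: rq_def)
qed

lemma dimG_less_if_other_eigenvalue:
  assumes "c' \<in> eigenvalues (Kmat A B)" and "c' \<noteq> c"
  shows "dimG A B c < CARD('n)"
proof (rule ccontr)
  assume "\<not> ?thesis"
  then have "dim (insert 0 (Gset A B c)) = DIM(real^'n)"
    using dim_subset_UNIV[of "insert 0 (Gset A B c)"] by (simp add: dimG_def)
  then have "span (insert 0 (Gset A B c)) = UNIV"
    using dim_eq_full[of "insert 0 (Gset A B c)"] by simp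
  then have all: "insert 0 (Gset A B c) = UNIV"
    by (metis span_eq_iff subspace_Gset)
  obtain v where v: "v \<in> Gset A B c'"
    using assms(1) eigenvalues_Kmat_iff by blast
  then have "v \<noteq> 0"
    by (simp add: Gset_def)
  with all have "v \<in> Gset A B c"
    by blast
  with v assms(2) show False
    using rq_Gset by metis
qed

end

section \<open>Proper subspaces are null\<close>

lemma proper_subspace_null_lborel:
  fixes W :: "(real^'n) set"
  assumes W: "subspace W" and dim: "dim W < CARD('n)"
  shows "W \<in> null_sets lborel"
proof -
  have "negligible W"
    using dim by (intro negligible_lowdim) simp
  then have "W \<in> null_sets lebesgue"
    by (simp add: negligible_iff_null_sets)
  moreover have "W \<in> sets lborel"
    using closed_subspace[OF W] by simp
  ultimately show ?thesis
    using null_sets_completion_iff by blast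
qed

lemma proper_subspace_null_std_gauss:
  fixes W :: "(real^'n) set"
  assumes "subspace W" and "dim W < CARD('n)"
  shows "W \<in> null_sets std_gauss"
  using proper_subspace_null_lborel[OF assms] unfolding std_gauss_def
  by (subst null_sets_density_iff) (auto intro: AE_I' simp: null_sets_def)

lemma measurable_normalize: "(\<lambda>y::real^'n. (1 / norm y) *\<^sub>R y) \<in> borel_measurable borel"
  by measurable

lemma null_sets_unif_sphereI:
  fixes W :: "(real^'n) set"
  assumes W: "subspace W" "dim W < CARD('n)" and S: "S \<in> sets borel"
    and cone: "(\<lambda>y. (1 / norm y) *\<^sub>R y) -` S \<subseteq> W"
  shows "S \<in> null_sets unif_sphere"
proof -
  let ?U = "uniform_measure lborel (ball (0::real^'n) 1)"
  have W_sets: "W \<in> sets lborel"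
    using closed_subspace[OF W(1)] by simp
  have "emeasure unif_sphere S = emeasure ?U ((\<lambda>y. (1 / norm y) *\<^sub>R y) -` S)"
    unfolding unif_sphere_def using S by (subst emeasure_distr) (auto simp: measurable_normalize)
  also have "\<dots> \<le> emeasure ?U W"
    using cone W_sets by (intro emeasure_mono) auto
  also have "\<dots> = emeasure lborel (ball 0 1 \<inter> W) / emeasure lborel (ball (0::real^'n) 1)"
    using W_sets by simp
  also have "emeasure lborel (ball 0 1 \<inter> W) = 0"
  proof -
    have "emeasure lborel (ball 0 1 \<inter> W) \<le> emeasure lborel W"
      using W_sets by (intro emeasure_mono) auto
    with proper_subspace_null_lborel[OF W] show ?thesis
      by auto
  qed
  finally show ?thesis
    using S by (auto simp: unif_sphere_def)
qed

lemma proper_subspace_null_unif_sphere: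
  fixes W :: "(real^'n) set"
  assumes W: "subspace W" "dim W < CARD('n)"
  shows "W \<in> null_sets unif_sphere"
proof (rule null_sets_unif_sphereI[OF W])
  show "W \<in> sets borel"
    using closed_subspace[OF W(1)] by simp
  show "(\<lambda>y. (1 / norm y) *\<^sub>R y) -` W \<subseteq> W"
  proof
    fix y assume "y \<in> (\<lambda>y. (1 / norm y) *\<^sub>R y) -` W"
    then have "norm y *\<^sub>R ((1 / norm y) *\<^sub>R y) \<in> W"
      using subspace_scale[OF W(1)] by blast
    then show "y \<in> W"
      by (cases "y = 0") (simp_all add: subspace_0[OF W(1)])
  qed
qed

lemma AE_unif_sphere_in_sphere: "AE y in unif_sphere. (y::real^'n) \<in> sphere 0 1"
proof -
  have "- sphere (0::real^'n) 1 \<in> null_sets unif_sphere"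
  proof (rule null_sets_unif_sphereI)
    show "subspace {0::real^'n}"
      by (simp add: subspace_def)
  qed (auto simp: norm_divide split: if_splits)
  then show ?thesis
    by (rule AE_I') auto
qed

section \<open>The next direction avoids the span of the iterate and a kernel\<close>

lemma (in prob_space) AE_indep_var_pair_notin:
  assumes indep: "indep_var borel V borel X" and C: "C \<in> sets (borel \<Otimes>\<^sub>M borel)"
    and sections: "\<And>v. emeasure (distr M borel X) (Pair v -` C) = 0"
  shows "AE \<omega> in M. (V \<omega>, X \<omega>) \<notin> C"
proof -
  have V: "V \<in> borel_measurable M" and X: "X \<in> borel_measurable M"
    using indep by (auto intro: indep_var_rv1 indep_var_rv2)
  then have VX: "(\<lambda>\<omega>. (V \<omega>, X \<omega>)) \<in> M \<rightarrow>\<^sub>M borel \<Otimes>\<^sub>M borel"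
    by (rule measurable_Pair)
  interpret X: sigma_finite_measure "distr M borel X"
    using X by (intro prob_space_imp_sigma_finite prob_space_distr)
  have "emeasure M ((\<lambda>\<omega>. (V \<omega>, X \<omega>)) -` C \<inter> space M)
      = emeasure (distr M borel V \<Otimes>\<^sub>M distr M borel X) C"
    using indep_var_distribution_eq[THEN iffD1, OF indep] VX C by (simp add: emeasure_distr)
  also have "\<dots> = (\<integral>\<^sup>+ v. emeasure (distr M borel X) (Pair v -` C) \<partial>distr M borel V)"
    using C by (intro X.emeasure_pair_measure_alt) simp
  also have "\<dots> = 0"
    by (simp add: sections)
  finally show ?thesis
    using measurable_sets[OF VX C] by (intro AE_I'[of "(\<lambda>\<omega>. (V \<omega>, X \<omega>)) -` C \<inter> space M"]) auto
qed

lemma algU_cong: "(\<And>j. j < k \<Longrightarrow> xs j = xs' j) \<Longrightarrow> algU sel g xs k = algU sel g xs' k"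
  by (induction k) (simp_all add: Let_def)

lemma measurable_algU:
  fixes sel :: "real^'n \<Rightarrow> real^'n \<Rightarrow> real"
  assumes sel_meas: "(\<lambda>p. sel (fst p) (snd p)) \<in> borel_measurable borel"
    and J: "insert None (Some ` {..<k}) \<subseteq> J"
  shows "(\<lambda>f. algU sel (f None) (\<lambda>j. f (Some j)) k) \<in> borel_measurable (PiM J (\<lambda>_. borel))"
  using J
proof (induction k)
  case 0
  then show ?case
    using measurable_normalize by (simp add: measurable_compose[OF measurable_component_singleton])
next
  case (Suc k)
  have "(\<lambda>p::(real^'n) \<times> (real^'n). fst p + sel (fst p) (snd p) *\<^sub>R snd p) \<in> borel_measurable borel"
    by (intro borel_measurable_add borel_measurable_scaleR sel_meas borel_measurable_continuous_onI
        continuous_on_fst continuous_on_snd continuous_on_id)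
  then have step: "(\<lambda>p. let w = fst p + sel (fst p) (snd p) *\<^sub>R snd p in (1 / norm w) *\<^sub>R w)
      \<in> borel_measurable borel"
    unfolding Let_def using measurable_normalize by (rule measurable_compose)
  have "insert None (Some ` {..<k}) \<subseteq> J"
    using Suc.prems by (auto simp: lessThan_Suc)
  with Suc have "(\<lambda>f. (algU sel (f None) (\<lambda>j. f (Some j)) k, f (Some k)))
      \<in> PiM J (\<lambda>_. borel) \<rightarrow>\<^sub>M borel \<Otimes>\<^sub>M borel"
    by (intro measurable_Pair measurable_component_singleton) auto
  from measurable_compose[OF this[unfolded borel_prod] step] show ?case
    by (simp add: Let_def)
qed

lemma (in prob_space) indep_var_algU_direction:
  fixes g :: "'a \<Rightarrow> real^'n" and x :: "nat \<Rightarrow> 'a \<Rightarrow> real^'n"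
  assumes indep: "indep_vars (\<lambda>_. borel) (\<lambda>i. case i of None \<Rightarrow> g | Some k \<Rightarrow> x k) UNIV"
    and sel_meas: "(\<lambda>p. sel (fst p) (snd p)) \<in> borel_measurable borel"
  shows "indep_var borel (\<lambda>\<omega>. algU sel (g \<omega>) (\<lambda>j. x j \<omega>) k) borel (x k)"
proof -
  define X where "X = (\<lambda>i. case i of None \<Rightarrow> g | Some k \<Rightarrow> x k)"
  define I where "I = insert None (Some ` {..<k})"
  have "indep_var (PiM I (\<lambda>_. borel)) (\<lambda>\<omega>. restrict (\<lambda>i. X i \<omega>) I)
      (PiM {Some k} (\<lambda>_. borel)) (\<lambda>\<omega>. restrict (\<lambda>i. X i \<omega>) {Some k})"
    using indep unfolding X_def by (intro indep_var_restrict) (auto simp: I_def)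
  then have "indep_var borel ((\<lambda>f. algU sel (f None) (\<lambda>j. f (Some j)) k) \<circ> (\<lambda>\<omega>. restrict (\<lambda>i. X i \<omega>) I))
      borel ((\<lambda>f. f (Some k)) \<circ> (\<lambda>\<omega>. restrict (\<lambda>i. X i \<omega>) {Some k}))"
    by (rule indep_var_compose) (auto intro: measurable_algU[OF sel_meas] simp: I_def)
  moreover have "(\<lambda>f. algU sel (f None) (\<lambda>j. f (Some j)) k) \<circ> (\<lambda>\<omega>. restrict (\<lambda>i. X i \<omega>) I)
      = (\<lambda>\<omega>. algU sel (g \<omega>) (\<lambda>j. x j \<omega>) k)"
    by (simp add: I_def X_def comp_def) (intro ext algU_cong, simp)
  moreover have "(\<lambda>f. f (Some k)) \<circ> (\<lambda>\<omega>. restrict (\<lambda>i. X i \<omega>) {Some k}) = x k"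
    by (auto simp: X_def)
  ultimately show ?thesis
    by simp
qed

lemma parallel_iff_Cauchy_Schwarz_eq:
  fixes a b :: "'a::real_inner"
  assumes "b \<noteq> 0"
  shows "(\<exists>t. a = t *\<^sub>R b) \<longleftrightarrow> (norm a)\<^sup>2 * (norm b)\<^sup>2 = (a \<bullet> b)\<^sup>2"
proof
  assume "\<exists>t. a = t *\<^sub>R b"
  then obtain t where "a = t *\<^sub>R b"
    by blast
  then show "(norm a)\<^sup>2 * (norm b)\<^sup>2 = (a \<bullet> b)\<^sup>2"
    by (simp add: dot_square_norm power_mult_distrib power2_abs algebra_simps)
next
  assume eq: "(norm a)\<^sup>2 * (norm b)\<^sup>2 = (a \<bullet> b)\<^sup>2"
  define t where "t = (a \<bullet> b) / (b \<bullet> b)"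
  have "b \<bullet> b \<noteq> 0"
    using assms by simp
  then have "(a - t *\<^sub>R b) \<bullet> (a - t *\<^sub>R b) = ((a \<bullet> a) * (b \<bullet> b) - (a \<bullet> b)\<^sup>2) / (b \<bullet> b)"
    by (simp add: t_def inner_diff_left inner_diff_right inner_commute field_simps power2_eq_square)
  also have "\<dots> = 0"
    using eq by (simp add: power2_norm_eq_inner)
  finally show "\<exists>t. a = t *\<^sub>R b"
    by auto
qed

lemma mem_span_insert_kernel_iff:
  fixes L :: "real^'n^'m"
  assumes "L *v v \<noteq> 0"
  shows "z \<in> span (insert v {z. L *v z = 0})
    \<longleftrightarrow> (norm (L *v z))\<^sup>2 * (norm (L *v v))\<^sup>2 = ((L *v z) \<bullet> (L *v v))\<^sup>2"
proof -
  have kernel: "span {z. L *v z = 0} = {z. L *v z = 0}"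
    by (rule span_eq_iff[THEN iffD2, OF subspace_kernel])
  have "z \<in> span (insert v {z. L *v z = 0}) \<longleftrightarrow> (\<exists>t. L *v (z - t *\<^sub>R v) = 0)"
    unfolding span_breakdown_eq kernel by simp
  also have "\<dots> \<longleftrightarrow> (\<exists>t. L *v z = t *\<^sub>R (L *v v))"
    by (simp add: matrix_vector_mult_diff_distrib matrix_vector_mult_scaleR)
  finally show ?thesis
    using parallel_iff_Cauchy_Schwarz_eq[OF assms] by simp
qed

lemma sets_span_insert_kernel:
  fixes L :: "real^'n^'m"
  shows "{p. L *v fst p \<noteq> 0 \<and> snd p \<in> span (insert (fst p) {z. L *v z = 0})}
    \<in> sets (borel \<Otimes>\<^sub>M borel)"
proof -
  let ?eq = "\<lambda>p::(real^'n) \<times> (real^'n).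
    (norm (L *v snd p))\<^sup>2 * (norm (L *v fst p))\<^sup>2 = ((L *v snd p) \<bullet> (L *v fst p))\<^sup>2"
  have "open {p :: (real^'n) \<times> (real^'n). L *v fst p \<noteq> 0}"
    by (intro open_Collect_neq continuous_intros
        matrix_vector_mult_linear_continuous_on[THEN continuous_on_compose2]) auto
  moreover have "closed {p. ?eq p}"
    by (intro closed_Collect_eq continuous_intros
        matrix_vector_mult_linear_continuous_on[THEN continuous_on_compose2]) auto
  moreover have "{p. L *v fst p \<noteq> 0 \<and> snd p \<in> span (insert (fst p) {z. L *v z = 0})}
      = {p. L *v fst p \<noteq> 0} \<inter> {p. ?eq p}"
    using mem_span_insert_kernel_iff by blast
  ultimately show ?thesis
    unfolding borel_prod by auto
qed

text \<open>Since the direction \<open>x k\<close> is independent of the iterate, Fubini reduces this to the fact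
  that a fixed proper subspace is \<open>unif_sphere\<close>-null.\<close>
lemma (in prob_space) AE_direction_notin_span_insert_kernel:
  fixes g :: "'a \<Rightarrow> real^'n" and x :: "nat \<Rightarrow> 'a \<Rightarrow> real^'n" and L :: "real^'n^'m"
  assumes indep: "indep_vars (\<lambda>_. borel) (\<lambda>i. case i of None \<Rightarrow> g | Some k \<Rightarrow> x k) UNIV"
    and x_distr: "distr M borel (x k) = unif_sphere"
    and sel_meas: "(\<lambda>p. sel (fst p) (snd p)) \<in> borel_measurable borel"
    and dim: "dim {z. L *v z = 0} + 2 \<le> CARD('n)"
  shows "AE \<omega> in M. L *v algU sel (g \<omega>) (\<lambda>j. x j \<omega>) k \<noteq> 0 \<longrightarrow>
    x k \<omega> \<notin> span (insert (algU sel (g \<omega>) (\<lambda>j. x j \<omega>) k) {z. L *v z = 0})"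
proof -
  let ?C = "{p. L *v fst p \<noteq> 0 \<and> snd p \<in> span (insert (fst p) {z. L *v z = 0})}"
  have "emeasure (distr M borel (x k)) (Pair v -` ?C) = 0" for v
  proof (cases "L *v v = 0")
    case False
    have "dim (span (insert v {z. L *v z = 0})) < CARD('n)"
      using dim dim_insert[of v "{z. L *v z = 0}"] by (simp add: dim_span split: if_splits)
    then have "span (insert v {z. L *v z = 0}) \<in> null_sets unif_sphere"
      by (intro proper_subspace_null_unif_sphere) simp_all
    moreover have "Pair v -` ?C = span (insert v {z. L *v z = 0})"
      using False by auto
    ultimately show ?thesis
      by (simp add: x_distr null_setsD1)
  qed simp
  then have "AE \<omega> in M. (algU sel (g \<omega>) (\<lambda>j. x j \<omega>) k, x k \<omega>) \<notin> ?C"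
    by (intro AE_indep_var_pair_notin indep_var_algU_direction[OF indep sel_meas]
        sets_span_insert_kernel)
  then show ?thesis
    by eventually_elim auto
qed

section \<open>One step of Algorithm U\<close>

lemma is_max_selectorD:
  assumes "is_max_selector A B sel" and "v \<in> sphere 0 1" and "x \<in> sphere 0 1"
  shows "v + \<tau> *\<^sub>R x \<noteq> 0 \<Longrightarrow>
      (\<And>\<sigma>. v + \<sigma> *\<^sub>R x \<noteq> 0 \<Longrightarrow> rq A B (v + \<sigma> *\<^sub>R x) \<le> rq A B (v + \<tau> *\<^sub>R x)) \<Longrightarrow>
      v + sel v x *\<^sub>R x \<noteq> 0 \<and>
      (\<forall>\<sigma>. v + \<sigma> *\<^sub>R x \<noteq> 0 \<longrightarrow> rq A B (v + \<sigma> *\<^sub>R x) \<le> rq A B (v + sel v x *\<^sub>R x))"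
    and "\<nexists>\<tau>. v + \<tau> *\<^sub>R x \<noteq> 0 \<and>
      (\<forall>\<sigma>. v + \<sigma> *\<^sub>R x \<noteq> 0 \<longrightarrow> rq A B (v + \<sigma> *\<^sub>R x) \<le> rq A B (v + \<tau> *\<^sub>R x)) \<Longrightarrow>
      sel v x = 0"
  using assms unfolding is_max_selector_def by (metis (no_types, lifting))+

lemma max_selector_nonzero:
  assumes "is_max_selector A B sel" and "v \<in> sphere 0 1" and "x \<in> sphere 0 1"
  shows "v + sel v x *\<^sub>R x \<noteq> 0"
  using is_max_selectorD[OF assms] assms(2) by fastforce

lemma max_selector_ge_maximiser:
  assumes "is_max_selector A B sel" and "v \<in> sphere 0 1" and "x \<in> sphere 0 1"
    and "v + \<tau> *\<^sub>R x \<noteq> 0"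
    and "\<And>\<sigma>. v + \<sigma> *\<^sub>R x \<noteq> 0 \<Longrightarrow> rq A B (v + \<sigma> *\<^sub>R x) \<le> rq A B (v + \<tau> *\<^sub>R x)"
  shows "rq A B (v + \<tau> *\<^sub>R x) \<le> rq A B (v + sel v x *\<^sub>R x)"
  using is_max_selectorD(1)[OF assms] assms(4) by blast

lemma algU_in_sphere:
  assumes "is_max_selector A B sel" and "g \<noteq> 0" and "\<And>j. xs j \<in> sphere 0 1"
  shows "algU sel g xs k \<in> sphere 0 1"
proof (induction k)
  case (Suc k)
  then show ?case
    using max_selector_nonzero[OF assms(1) Suc assms(3)] by (simp add: Let_def)
qed (use assms(2) in \<open>simp add: norm_divide\<close>)

lemma step_into_eigenspace_imp_direction_in_span:
  assumes "v \<notin> Gset A B c" and "v + s *\<^sub>R x \<in> Gset A B c"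
  shows "x \<in> span (insert v (insert 0 (Gset A B c)))"
proof -
  have "s \<noteq> 0"
    using assms by auto
  then have "x - (- 1 / s) *\<^sub>R v = (1 / s) *\<^sub>R (v + s *\<^sub>R x)"
    by (simp add: algebra_simps)
  also have "\<dots> \<in> span (insert 0 (Gset A B c))"
    using assms(2) \<open>s \<noteq> 0\<close> by (simp add: span_base scaleR_mem_Gset_iff)
  finally show ?thesis
    using span_breakdown_eq by blast
qed

context generalized_eigenproblem
begin

text \<open>If the top eigenspace is a hyperplane, the line through \<open>v\<close> in direction \<open>x\<close> meets it, so
  the maximum of the Rayleigh quotient along the line is already \<open>\<lambda>\<^sub>1\<close>.\<close>
lemma step_into_top_eigenspace:
  assumes sel_max: "is_max_selector A B sel" and v: "v \<in> sphere 0 1" and x: "x \<in> sphere 0 1"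
    and dim: "dimG A B (lambda1 A B) = CARD('n) - 1"
    and x_notin: "x \<notin> Gset A B (lambda1 A B)" and x_v: "x \<notin> span {v}"
  shows "v + sel v x *\<^sub>R x \<in> Gset A B (lambda1 A B)"
proof -
  let ?H = "insert 0 (Gset A B (lambda1 A B))"
  have span_H: "span ?H = ?H"
    using subspace_Gset by (rule span_eq_iff[THEN iffD2])
  have "x \<notin> span ?H"
    using x x_notin span_H by auto
  then have "dim (insert x ?H) = CARD('n)"
    using dim by (simp add: dim_insert dimG_def)
  then have "v \<in> span (insert x ?H)"
    using dim_eq_full[of "insert x ?H"] by simp
  then obtain a where "v - a *\<^sub>R x \<in> ?H"
    using span_H span_breakdown_eq by blast
  moreover have "v - a *\<^sub>R x \<noteq> 0"
  proof
    assume "v - a *\<^sub>R x = 0"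
    with v have "a \<noteq> 0" and "x = (1 / a) *\<^sub>R v"
      by auto
    then have "x \<in> span {v}"
      by (simp add: span_base span_mul)
    with x_v show False ..
  qed
  ultimately have "v + (- a) *\<^sub>R x \<in> Gset A B (lambda1 A B)"
    by simp
  then have top: "rq A B (v + (- a) *\<^sub>R x) = lambda1 A B" and nonzero: "v + (- a) *\<^sub>R x \<noteq> 0"
    by (auto simp: rq_Gset Gset_def)
  have "rq A B (v + \<sigma> *\<^sub>R x) \<le> rq A B (v + (- a) *\<^sub>R x)" if "v + \<sigma> *\<^sub>R x \<noteq> 0" for \<sigma>
    using rq_le_lambda1[OF that] top by simp
  then have "lambda1 A B \<le> rq A B (v + sel v x *\<^sub>R x)"
    using max_selector_ge_maximiser[OF sel_max v x nonzero] top by simp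
  moreover have "rq A B (v + sel v x *\<^sub>R x) \<le> lambda1 A B"
    using rq_le_lambda1 max_selector_nonzero[OF sel_max v x] by blast
  ultimately show ?thesis
    using rq_eq_lambda1_imp_Gset max_selector_nonzero[OF sel_max v x] by simp
qed

end

section \<open>Almost sure behaviour of Algorithm U\<close>

locale algorithm_U = prob_space M + generalized_eigenproblem A B
  for M :: "'w measure" and A :: "real^'n^'m" and B :: "real^'n^'l" +
  fixes g :: "'w \<Rightarrow> real^'n" and x :: "nat \<Rightarrow> 'w \<Rightarrow> real^'n"
    and sel :: "real^'n \<Rightarrow> real^'n \<Rightarrow> real"
  assumes dim_ge_2: "CARD('n) \<ge> 2"
    and g_distr: "distr M borel g = std_gauss"
    and x_distr: "\<And>k. distr M borel (x k) = unif_sphere"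
    and indep: "indep_vars (\<lambda>_. borel) (\<lambda>i. case i of None \<Rightarrow> g | Some k \<Rightarrow> x k) UNIV"
    and sel_max: "is_max_selector A B sel"
    and sel_meas: "(\<lambda>p. sel (fst p) (snd p)) \<in> borel_measurable borel"
begin

abbreviation iterate :: "nat \<Rightarrow> 'w \<Rightarrow> real^'n"
  where "iterate k \<omega> \<equiv> algU sel (g \<omega>) (\<lambda>j. x j \<omega>) k"

lemma measurable_g: "g \<in> borel_measurable M"
  and measurable_x: "x k \<in> borel_measurable M"
proof -
  have "random_variable borel (case i of None \<Rightarrow> g | Some k \<Rightarrow> x k)" for i
    using indep unfolding indep_vars_def by blast
  from this[of None] this[of "Some k"] show "g \<in> borel_measurable M" "x k \<in> borel_measurable M"
    by simp_all
qed

lemma AE_g_notin_proper_subspace: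
  assumes "subspace W" and "dim W < CARD('n)"
  shows "AE \<omega> in M. g \<omega> \<notin> W"
proof -
  have "AE y in distr M borel g. y \<notin> W"
    unfolding g_distr using proper_subspace_null_std_gauss[OF assms] by (rule AE_not_in)
  from AE_distrD[OF measurable_g this] show ?thesis .
qed

lemma AE_x_notin_proper_subspace:
  assumes "subspace W" and "dim W < CARD('n)"
  shows "AE \<omega> in M. x k \<omega> \<notin> W"
proof -
  have "AE y in distr M borel (x k). y \<notin> W"
    unfolding x_distr using proper_subspace_null_unif_sphere[OF assms] by (rule AE_not_in)
  from AE_distrD[OF measurable_x this] show ?thesis .
qed

lemma AE_g_nonzero: "AE \<omega> in M. g \<omega> \<noteq> 0"
  using AE_g_notin_proper_subspace[of "{0}"] by (simp add: subspace_def)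

lemma AE_x_in_sphere: "AE \<omega> in M. \<forall>j. x j \<omega> \<in> sphere 0 1"
proof -
  have "AE y in distr M borel (x j). y \<in> sphere 0 1" for j
    unfolding x_distr by (rule AE_unif_sphere_in_sphere)
  then show ?thesis
    unfolding AE_all_countable using AE_distrD[OF measurable_x] by blast
qed

lemma AE_iterate_in_sphere: "AE \<omega> in M. iterate k \<omega> \<in> sphere 0 1"
  using AE_g_nonzero AE_x_in_sphere by eventually_elim (rule algU_in_sphere[OF sel_max], auto)

lemma initial_not_gen_eigvec:
  assumes "card (eigenvalues (Kmat A B)) \<ge> 2"
  shows "AE \<omega> in M. \<not> gen_eigvec A B (iterate 0 \<omega>)"
proof -
  have finite: "finite (eigenvalues (Kmat A B))"
    using assms card.infinite by fastforce
  have "\<exists>c'\<in>eigenvalues (Kmat A B). c' \<noteq> c" for c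
  proof (rule ccontr)
    assume "\<not> ?thesis"
    then have "card (eigenvalues (Kmat A B)) \<le> card {c}"
      by (intro card_mono) auto
    with assms show False
      by simp
  qed
  then have "dimG A B c < CARD('n)" for c
    using dimG_less_if_other_eigenvalue by blast
  then have "AE \<omega> in M. \<forall>c\<in>eigenvalues (Kmat A B). g \<omega> \<notin> insert 0 (Gset A B c)"
    using finite by (intro AE_finite_allI AE_g_notin_proper_subspace subspace_Gset) (simp_all add: dimG_def)
  then show ?thesis
    by eventually_elim (auto simp: gen_eigvec_def scaleR_mem_Gset_iff eigenvalues_Kmat_iff)
qed

lemma first_iterate_in_top_eigenspace:
  assumes "dimG A B (lambda1 A B) = CARD('n) - 1"
  shows "AE \<omega> in M. iterate 1 \<omega> \<in> Gset A B (lambda1 A B)"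
proof -
  have "AE \<omega> in M. x 0 \<omega> \<notin> insert 0 (Gset A B (lambda1 A B))"
    using assms by (intro AE_x_notin_proper_subspace subspace_Gset) (simp add: dimG_def)
  moreover have "AE \<omega> in M. mat 1 *v iterate 0 \<omega> \<noteq> 0 \<longrightarrow>
      x 0 \<omega> \<notin> span (insert (iterate 0 \<omega>) {z. mat 1 *v z = (0::real^'n)})"
    using dim_ge_2 by (intro AE_direction_notin_span_insert_kernel[OF indep x_distr sel_meas]) simp
  ultimately show ?thesis
    using AE_g_nonzero AE_x_in_sphere
  proof eventually_elim
    case (elim \<omega>)
    then have "x 0 \<omega> \<notin> span {iterate 0 \<omega>}"
      by (simp add: insert_commute[of _ 0] span_insert_0)
    with elim have "iterate 0 \<omega> + sel (iterate 0 \<omega>) (x 0 \<omega>) *\<^sub>R x 0 \<omega> \<in> Gset A B (lambda1 A B)"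
      by (intro step_into_top_eigenspace[OF sel_max _ _ assms]) (auto simp: norm_divide)
    then show ?case
      using Gset_nonzero by (simp add: Let_def scaleR_mem_Gset_iff del: algU.simps(1))
  qed
qed

lemma no_entry_into_small_eigenspace:
  assumes "dimG A B c < CARD('n) - 1"
  shows "AE \<omega> in M. \<not> (iterate k \<omega> \<notin> Gset A B c \<and> iterate (Suc k) \<omega> \<in> Gset A B c)"
proof -
  define L where "L = transpose A ** A - c *\<^sub>R (transpose B ** B)"
  have kernel: "{z. L *v z = 0} = insert 0 (Gset A B c)"
    by (simp add: L_def Gset_kernel)
  have "AE \<omega> in M. L *v iterate k \<omega> \<noteq> 0 \<longrightarrow>
      x k \<omega> \<notin> span (insert (iterate k \<omega>) {z. L *v z = 0})"
    using assms by (intro AE_direction_notin_span_insert_kernel[OF indep x_distr sel_meas])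
      (simp add: kernel dimG_def)
  then show ?thesis
    using AE_iterate_in_sphere[of k]
  proof eventually_elim
    case (elim \<omega>)
    show ?case
    proof
      assume *: "iterate k \<omega> \<notin> Gset A B c \<and> iterate (Suc k) \<omega> \<in> Gset A B c"
      then have "iterate k \<omega> + sel (iterate k \<omega>) (x k \<omega>) *\<^sub>R x k \<omega> \<in> Gset A B c"
        by (simp add: Let_def scaleR_mem_Gset_iff)
      with * have "x k \<omega> \<in> span (insert (iterate k \<omega>) {z. L *v z = 0})"
        unfolding kernel by (intro step_into_eigenspace_imp_direction_in_span) auto
      moreover have "iterate k \<omega> \<notin> {z. L *v z = 0}"
        unfolding kernel using * elim(2) by auto
      ultimately show False
        using elim(1) by blast
    qed
  qed
qed

lemma initial_in_top_eigenspace_if_single_eigenvalue: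
  assumes "card (eigenvalues (Kmat A B)) = 1"
  shows "AE \<omega> in M. iterate 0 \<omega> \<in> Gset A B (lambda1 A B)"
  using AE_g_nonzero by eventually_elim (simp add: single_eigenvalue_imp_Gset[OF assms])

end

theorem mainTheorem5:
  fixes A :: "real^'n^'m" and B :: "real^'n^'l"
    and M :: "'w measure"
    and g :: "'w \<Rightarrow> real^'n" and x :: "nat \<Rightarrow> 'w \<Rightarrow> real^'n"
    and sel :: "real^'n \<Rightarrow> real^'n \<Rightarrow> real"
  assumes d2: "CARD('n) \<ge> 2"
    and kerB: "\<forall>v. B *v v = 0 \<longrightarrow> v = 0"
    and P: "prob_space M"
    and g_distr: "distr M borel g = std_gauss"
    and x_distr: "\<forall>k. distr M borel (x k) = unif_sphere"
    and indep: "prob_space.indep_vars M (\<lambda>_. borel)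
                  (\<lambda>i. case i of None \<Rightarrow> g | Some k \<Rightarrow> x k) UNIV"
    and sel_max: "is_max_selector A B sel"
    and sel_meas: "(\<lambda>p. sel (fst p) (snd p)) \<in> borel_measurable borel"
  shows
    "(card (eigenvalues (Kmat A B)) \<ge> 2 \<longrightarrow>
        (AE \<omega> in M. \<not> gen_eigvec A B (algU sel (g \<omega>) (\<lambda>k. x k \<omega>) 0))
      \<and> (dimG A B (lambda1 A B) = CARD('n) - 1 \<longrightarrow>
           (AE \<omega> in M. algU sel (g \<omega>) (\<lambda>k. x k \<omega>) 1 \<in> Gset A B (lambda1 A B)))
      \<and> (\<forall>k c. c \<in> eigenvalues (Kmat A B) \<and> dimG A B c < CARD('n) - 1 \<longrightarrow>
           (AE \<omega> in M. \<not> (algU sel (g \<omega>) (\<lambda>k. x k \<omega>) k \<notin> Gset A B c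
                          \<and> algU sel (g \<omega>) (\<lambda>k. x k \<omega>) (Suc k) \<in> Gset A B c))))
   \<and> (card (eigenvalues (Kmat A B)) = 1 \<longrightarrow>
        (AE \<omega> in M. algU sel (g \<omega>) (\<lambda>k. x k \<omega>) 0 \<in> Gset A B (lambda1 A B)))"
proof -
  interpret algorithm_U M A B g x sel
    using P kerB d2 g_distr x_distr indep sel_max sel_meas
    by (intro algorithm_U.intro generalized_eigenproblem.intro algorithm_U_axioms.intro) simp_all
  show ?thesis
    by (intro conjI impI allI initial_not_gen_eigvec first_iterate_in_top_eigenspace
        no_entry_into_small_eigenspace initial_in_top_eigenspace_if_single_eigenvalue) auto
qed

end
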